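(* Let $(S,\lambda_S^\bullet,\mu_S^{(0)})$, $(G,\lambda_G^\bullet,\mu_G^{(0)})$, $(T,\lambda_T^\bullet,\mu_T^{(0)})$ be Haar groupoids, $p:S\to G$, $q:T\to G$ homomorphisms of Haar groupoids, $P$ their weak pullback, and $\lambda_P^{(s,g,t)}=\lambda_S^s\times\delta_g\times\lambda_T^t$ for $(s,g,t)\in P^{(0)}$. Then $\lambda_P^\bullet$ is left invariant: for every $x\in P$ and every Borel $E\subseteq P$, $\lambda_P^{d_P(x)}(E)=\lambda_P^{r_P(x)}\big(x\cdot(E\cap P^{d_P(x)})\big)$, where $P^{v}=r_P^{-1}(v)$.
   Context: For a groupoid $G$: unit space $G^{(0)}$, range/source $r,d$, $G^u=r^{-1}(u)$. A continuous left Haar system on a groupoid $G$ is a family $\{\lambda^u\}_{u\in G^{(0)}}$ of positive Borel measures on $G$, $\lambda^u$ concentrated on $G^u$, which is continuous ($u\mapsto\int f\,d\lambda^u$ continuous for every continuous compactly supported $f\ge0$), left invariant ($\lambda^{d(x)}(E)=\lambda^{r(x)}(x\cdot(E\cap G^{d(x)}))$) and positive on open sets ($\lambda^u(A)>0$ for open $A$ meeting $G^u$). A Haar groupoid $(G,\lambda^\bullet,\mu^{(0)})$ is a second countable, locally compact, Hausdorff topological groupoid with a continuous left Haar system and a non-zero Radon measure $\mu^{(0)}$ on $G^{(0)}$ that is quasi-invariant (the induced measure $\mu(E)=\int\lambda^u(E)d\mu^{(0)}(u)$ and $\mu^{-1}(E)=\mu(E^{-1})$ are mutually absolutely continuous).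 A homomorphism of Haar groupoids is a continuous groupoid homomorphism $p$ with $p_*\mu\sim\nu$ for the induced measures. The weak pullback is $P=\{(s,g,t)\in S\times G\times T: r_G(g)=r_G(p(s)),\ d_G(g)=r_G(q(t))\}$ with subspace topology and groupoid operations: $((s,g,t),(\sigma,h,\tau))$ composable iff $r_S(\sigma)=d_S(s)$, $r_T(\tau)=d_T(t)$, $h=p(s)^{-1}gq(t)$, product $(s\sigma,g,t\tau)$; inverse $(s^{-1},p(s)^{-1}gq(t),t^{-1})$; $r_P(s,g,t)=(r_S(s),g,r_T(t))$, $d_P(s,g,t)=(d_S(s),p(s)^{-1}gq(t),d_T(t))$; $P^{(0)}=\{(s,g,t):s\in S^{(0)},t\in T^{(0)},r_G(g)=p(s),d_G(g)=q(t)\}$. *)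

theory Defs
  imports "HOL-Analysis.Analysis" "HOL-Probability.Probability"
begin

record 'a topgroupoid =
  gtop  :: "'a topology"
  gunits :: "'a set"
  grng :: "'a \<Rightarrow> 'a"
  gdom :: "'a \<Rightarrow> 'a"
  gmult :: "'a \<Rightarrow> 'a \<Rightarrow> 'a"
  ginv :: "'a \<Rightarrow> 'a"

abbreviation garr :: "('a, 'm) topgroupoid_scheme \<Rightarrow> 'a set" where
  "garr G \<equiv> topspace (gtop G)"

definition composable :: "('a, 'm) topgroupoid_scheme \<Rightarrow> ('a \<times> 'a) set" where
  "composable G = {(x, y). x \<in> garr G \<and> y \<in> garr G \<and> gdom G x = grng G y}"

definition groupoid :: "('a, 'm) topgroupoid_scheme \<Rightarrow> bool" where
  "groupoid G \<longleftrightarrow>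
     gunits G \<subseteq> garr G
   \<and> (\<forall>x\<in>garr G. grng G x \<in> gunits G \<and> gdom G x \<in> gunits G)
   \<and> (\<forall>u\<in>gunits G. grng G u = u \<and> gdom G u = u)
   \<and> (\<forall>(x, y)\<in>composable G. gmult G x y \<in> garr G
          \<and> grng G (gmult G x y) = grng G x \<and> gdom G (gmult G x y) = gdom G y)
   \<and> (\<forall>x y z. (x, y) \<in> composable G \<and> (y, z) \<in> composable G \<longrightarrow>
          gmult G (gmult G x y) z = gmult G x (gmult G y z))
   \<and> (\<forall>x\<in>garr G. gmult G (grng G x) x = x \<and> gmult G x (gdom G x) = x)
   \<and> (\<forall>x\<in>garr G. ginv G x \<in> garr G
          \<and> gdom G x = grng G (ginv G x) \<and> grng G x = gdom G (ginv G x)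
          \<and> gmult G x (ginv G x) = grng G x \<and> gmult G (ginv G x) x = gdom G x)"

definition topological_groupoid :: "('a, 'm) topgroupoid_scheme \<Rightarrow> bool" where
  "topological_groupoid G \<longleftrightarrow> groupoid G
   \<and> continuous_map (gtop G) (gtop G) (grng G)
   \<and> continuous_map (gtop G) (gtop G) (gdom G)
   \<and> continuous_map (gtop G) (gtop G) (ginv G)
   \<and> continuous_map (subtopology (prod_topology (gtop G) (gtop G)) (composable G)) (gtop G)
        (\<lambda>(x, y). gmult G x y)"

definition rfibre :: "('a, 'm) topgroupoid_scheme \<Rightarrow> 'a \<Rightarrow> 'a set" where
  "rfibre G u = {x \<in> garr G. grng G x = u}"

definition borel_of :: "'a topology \<Rightarrow> 'a measure" where
  "borel_of X = sigma (topspace X) {U. openin X U}"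

definition borel_measure_on :: "'a topology \<Rightarrow> 'a measure \<Rightarrow> bool" where
  "borel_measure_on X M \<longleftrightarrow> space M = topspace X \<and> sets M = sets (borel_of X)"

definition radon_measure_on :: "'a topology \<Rightarrow> 'a measure \<Rightarrow> bool" where
  "radon_measure_on X M \<longleftrightarrow> borel_measure_on X M
   \<and> (\<forall>K. compactin X K \<longrightarrow> emeasure M K < \<infinity>)
   \<and> (\<forall>E\<in>sets M. emeasure M E = (INF U\<in>{U. openin X U \<and> E \<subseteq> U}. emeasure M U))
   \<and> (\<forall>U. openin X U \<longrightarrow> emeasure M U = (SUP K\<in>{K. compactin X K \<and> K \<subseteq> U}. emeasure M K))"

definition continuous_left_haar_system ::
  "('a, 'm) topgroupoid_scheme \<Rightarrow> ('a \<Rightarrow> 'a measure) \<Rightarrow> bool" where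
  "continuous_left_haar_system G lam \<longleftrightarrow>
     (\<forall>u\<in>gunits G. borel_measure_on (gtop G) (lam u)
        \<and> emeasure (lam u) (garr G - rfibre G u) = 0)
   \<and> (\<forall>f::'a \<Rightarrow> real. continuous_map (gtop G) euclideanreal f
        \<and> compactin (gtop G) ((gtop G) closure_of {x \<in> garr G. f x \<noteq> 0})
        \<and> (\<forall>x\<in>garr G. 0 \<le> f x) \<longrightarrow>
          (\<forall>u\<in>gunits G. (\<integral>\<^sup>+ x. ennreal (f x) \<partial>lam u) < \<infinity>)
          \<and> continuous_map (subtopology (gtop G) (gunits G)) euclidean
              (\<lambda>u. \<integral>\<^sup>+ x. ennreal (f x) \<partial>lam u))
   \<and> (\<forall>x\<in>garr G. \<forall>E\<in>sets (borel_of (gtop G)).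
        emeasure (lam (gdom G x)) E
          = emeasure (lam (grng G x)) (gmult G x ` (E \<inter> rfibre G (gdom G x))))
   \<and> (\<forall>u\<in>gunits G. \<forall>A. openin (gtop G) A \<and> A \<inter> rfibre G u \<noteq> {} \<longrightarrow>
        emeasure (lam u) A > 0)"

definition induced_measure ::
  "('a \<Rightarrow> 'a measure) \<Rightarrow> 'a measure \<Rightarrow> 'a set \<Rightarrow> ennreal" where
  "induced_measure lam mu0 E = (\<integral>\<^sup>+ u. emeasure (lam u) E \<partial>mu0)"

definition haar_groupoid ::
  "('a, 'm) topgroupoid_scheme \<Rightarrow> ('a \<Rightarrow> 'a measure) \<Rightarrow> 'a measure \<Rightarrow> bool" where
  "haar_groupoid G lam mu0 \<longleftrightarrow>
     topological_groupoid G
   \<and> second_countable (gtop G) \<and> locally_compact_space (gtop G) \<and> Hausdorff_space (gtop G)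
   \<and> continuous_left_haar_system G lam
   \<and> radon_measure_on (subtopology (gtop G) (gunits G)) mu0
   \<and> emeasure mu0 (gunits G) \<noteq> 0
   \<and> (\<forall>E\<in>sets (borel_of (gtop G)).
        induced_measure lam mu0 E = 0 \<longleftrightarrow> induced_measure lam mu0 (ginv G ` E) = 0)"

definition haar_groupoid_hom ::
  "('a, 'm) topgroupoid_scheme \<Rightarrow> ('a \<Rightarrow> 'a measure) \<Rightarrow> 'a measure \<Rightarrow>
   ('b, 'n) topgroupoid_scheme \<Rightarrow> ('b \<Rightarrow> 'b measure) \<Rightarrow> 'b measure \<Rightarrow>
   ('a \<Rightarrow> 'b) \<Rightarrow> bool" where
  "haar_groupoid_hom S lamS muS G lamG muG p \<longleftrightarrow>
     continuous_map (gtop S) (gtop G) p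
   \<and> (\<forall>(x, y)\<in>composable S. (p x, p y) \<in> composable G \<and> p (gmult S x y) = gmult G (p x) (p y))
   \<and> (\<forall>E\<in>sets (borel_of (gtop G)).
        induced_measure lamS muS (p -` E \<inter> garr S) = 0 \<longleftrightarrow> induced_measure lamG muG E = 0)"

definition wpb_arr ::
  "('a, 'm) topgroupoid_scheme \<Rightarrow> ('b, 'n) topgroupoid_scheme \<Rightarrow> ('c, 'k) topgroupoid_scheme
   \<Rightarrow> ('a \<Rightarrow> 'b) \<Rightarrow> ('c \<Rightarrow> 'b) \<Rightarrow> ('a \<times> 'b \<times> 'c) set" where
  "wpb_arr S G T p q = {(s, g, t). s \<in> garr S \<and> g \<in> garr G \<and> t \<in> garr T
      \<and> grng G g = grng G (p s) \<and> gdom G g = grng G (q t)}"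

definition wpb_top ::
  "('a, 'm) topgroupoid_scheme \<Rightarrow> ('b, 'n) topgroupoid_scheme \<Rightarrow> ('c, 'k) topgroupoid_scheme
   \<Rightarrow> ('a \<Rightarrow> 'b) \<Rightarrow> ('c \<Rightarrow> 'b) \<Rightarrow> ('a \<times> 'b \<times> 'c) topology" where
  "wpb_top S G T p q = subtopology (prod_topology (gtop S) (prod_topology (gtop G) (gtop T)))
      (wpb_arr S G T p q)"

definition wpb_units ::
  "('a, 'm) topgroupoid_scheme \<Rightarrow> ('b, 'n) topgroupoid_scheme \<Rightarrow> ('c, 'k) topgroupoid_scheme
   \<Rightarrow> ('a \<Rightarrow> 'b) \<Rightarrow> ('c \<Rightarrow> 'b) \<Rightarrow> ('a \<times> 'b \<times> 'c) set" where
  "wpb_units S G T p q = {(s, g, t). s \<in> gunits S \<and> t \<in> gunits T \<and> g \<in> garr G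
      \<and> grng G g = p s \<and> gdom G g = q t}"

definition wpb_rng ::
  "('a, 'm) topgroupoid_scheme \<Rightarrow> ('c, 'k) topgroupoid_scheme
   \<Rightarrow> ('a \<times> 'b \<times> 'c) \<Rightarrow> ('a \<times> 'b \<times> 'c)" where
  "wpb_rng S T = (\<lambda>(s, g, t). (grng S s, g, grng T t))"

definition wpb_dom ::
  "('a, 'm) topgroupoid_scheme \<Rightarrow> ('b, 'n) topgroupoid_scheme \<Rightarrow> ('c, 'k) topgroupoid_scheme
   \<Rightarrow> ('a \<Rightarrow> 'b) \<Rightarrow> ('c \<Rightarrow> 'b) \<Rightarrow> ('a \<times> 'b \<times> 'c) \<Rightarrow> ('a \<times> 'b \<times> 'c)" where
  "wpb_dom S G T p q = (\<lambda>(s, g, t).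
      (gdom S s, gmult G (gmult G (ginv G (p s)) g) (q t), gdom T t))"

definition wpb_mult ::
  "('a, 'm) topgroupoid_scheme \<Rightarrow> ('c, 'k) topgroupoid_scheme
   \<Rightarrow> ('a \<times> 'b \<times> 'c) \<Rightarrow> ('a \<times> 'b \<times> 'c) \<Rightarrow> ('a \<times> 'b \<times> 'c)" where
  "wpb_mult S T = (\<lambda>(s, g, t) (\<sigma>, h, \<tau>). (gmult S s \<sigma>, g, gmult T t \<tau>))"

definition wpb_haar ::
  "('b, 'n) topgroupoid_scheme \<Rightarrow> ('a \<Rightarrow> 'a measure) \<Rightarrow> ('c \<Rightarrow> 'c measure)
   \<Rightarrow> ('a \<times> 'b \<times> 'c) \<Rightarrow> ('a \<times> 'b \<times> 'c) measure" where
  "wpb_haar G lamS lamT = (\<lambda>(s, g, t).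
      lamS s \<Otimes>\<^sub>M (return (borel_of (gtop G)) g \<Otimes>\<^sub>M lamT t))"

end

theory Submission
  imports Defs
begin

text \<open>The arrow \<open>x = (s, g, t)\<close> maps the fibre over \<open>d_P(x) = (d s, g', d t)\<close>, where
  \<open>g' = p(s)\<inverse> g q(t)\<close>, to the fibre over \<open>r_P(x)\<close> by \<open>(\<sigma>, g', \<tau>) \<mapsto> (s\<sigma>, g, t\<tau>)\<close>: the middle
  coordinate is frozen, exactly as the Dirac factor of \<open>\<lambda>_P\<close> is. So the translate of \<open>E\<close> is
  \<open>{(\<sigma>, g, \<tau>) : \<sigma> \<in> S^{r s}, \<tau> \<in> T^{r t}, (s\<inverse>\<sigma>, g', t\<inverse>\<tau>) \<in> E}\<close>. Both sides of the claimed
  identity are iterated integrals by Fubini (the measures \<open>\<lambda>^u\<close> are \<sigma>-finite because the groupoids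
  are locally compact and second countable). The inner \<open>\<lambda>_T\<close>-integrals agree slice by slice by left
  invariance of \<open>\<lambda>_T\<close>, and the outer \<open>\<lambda>_S\<close>-integrals agree by left invariance of \<open>\<lambda>_S\<close>, read as
  the change of variables \<open>\<sigma> \<mapsto> s\<sigma>\<close>.\<close>

lemma space_borel_of [simp]: "space (borel_of X) = topspace X"
  unfolding borel_of_def by (simp add: space_measure_of_conv openin_subset subset_iff)

lemma sets_borel_of: "sets (borel_of X) = sigma_sets (topspace X) {U. openin X U}"
  unfolding borel_of_def by (rule sets_measure_of) (auto dest: openin_subset)

lemma openin_in_borel_of: "openin X U \<Longrightarrow> U \<in> sets (borel_of X)"
  unfolding sets_borel_of by auto

lemma closedin_in_borel_of:
  assumes "closedin X C"
  shows "C \<in> sets (borel_of X)"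
proof -
  have "C = topspace X - (topspace X - C)" "openin X (topspace X - C)"
    using assms by (auto simp: closedin_def)
  then show ?thesis
    by (metis openin_in_borel_of sets.compl_sets space_borel_of)
qed

lemma measurable_borel_ofI:
  assumes "f \<in> space M \<rightarrow> topspace Y"
    and "\<And>V. openin Y V \<Longrightarrow> f -` V \<inter> space M \<in> sets M"
  shows "f \<in> measurable M (borel_of Y)"
  unfolding borel_of_def using assms by (intro measurable_measure_of) (auto dest: openin_subset)

lemma continuous_map_measurable:
  assumes "continuous_map X Y f"
  shows "f \<in> measurable (borel_of X) (borel_of Y)"
proof (rule measurable_borel_ofI)
  show "f \<in> space (borel_of X) \<rightarrow> topspace Y"
    using assms by (auto dest: continuous_map_image_subset_topspace)
  fix V assume "openin Y V"
  then have "openin X {x \<in> topspace X. f x \<in> V}"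
    using assms openin_continuous_map_preimage by blast
  then show "f -` V \<inter> space (borel_of X) \<in> sets (borel_of X)"
    by (metis (no_types) Collect_conj_eq Int_commute openin_in_borel_of space_borel_of
        vimage_def Collect_mem_eq)
qed

lemma measurable_piecewise_continuous:
  assumes A: "A \<in> sets (borel_of X)" and f: "continuous_map (subtopology X A) Y f"
    and c: "c \<in> topspace Y"
  shows "(\<lambda>x. if x \<in> A then f x else c) \<in> measurable (borel_of X) (borel_of Y)"
proof (rule measurable_borel_ofI)
  have AX: "A \<subseteq> topspace X" using sets.sets_into_space[OF A] by simp
  then show "(\<lambda>x. if x \<in> A then f x else c) \<in> space (borel_of X) \<rightarrow> topspace Y"
    using f c by (auto simp: continuous_map_def)
  fix V assume V: "openin Y V"
  obtain U where U: "openin X U" "{x \<in> topspace (subtopology X A). f x \<in> V} = U \<inter> A"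
    using openin_continuous_map_preimage[OF f V] unfolding openin_subtopology by blast
  have "(\<lambda>x. if x \<in> A then f x else c) -` V \<inter> space (borel_of X)
      = (U \<inter> A) \<union> (if c \<in> V then topspace X - A else {})"
    using U(2) AX by (auto split: if_split_asm)
  moreover have "U \<inter> A \<in> sets (borel_of X)" using openin_in_borel_of[OF U(1)] A by auto
  moreover have "topspace X - A \<in> sets (borel_of X)"
    using A by (metis sets.compl_sets space_borel_of)
  ultimately show "(\<lambda>x. if x \<in> A then f x else c) -` V \<inter> space (borel_of X) \<in> sets (borel_of X)"
    by auto
qed

lemma second_countable_rectangle_base:
  assumes "second_countable X" "second_countable Y"
  obtains BX BY where "countable BX" "countable BY"
    "\<And>U. U \<in> BX \<Longrightarrow> openin X U" "\<And>V. V \<in> BY \<Longrightarrow> openin Y V"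
    "\<And>W z. openin (prod_topology X Y) W \<Longrightarrow> z \<in> W \<Longrightarrow> \<exists>U\<in>BX. \<exists>V\<in>BY. z \<in> U \<times> V \<and> U \<times> V \<subseteq> W"
proof -
  obtain BX where BX: "countable BX" "\<And>V. V \<in> BX \<Longrightarrow> openin X V"
    "\<And>U x. openin X U \<Longrightarrow> x \<in> U \<Longrightarrow> \<exists>V \<in> BX. x \<in> V \<and> V \<subseteq> U"
    using assms(1) unfolding second_countable_def by metis
  obtain BY where BY: "countable BY" "\<And>V. V \<in> BY \<Longrightarrow> openin Y V"
    "\<And>U x. openin Y U \<Longrightarrow> x \<in> U \<Longrightarrow> \<exists>V \<in> BY. x \<in> V \<and> V \<subseteq> U"
    using assms(2) unfolding second_countable_def by metis
  have "\<exists>U\<in>BX. \<exists>V\<in>BY. z \<in> U \<times> V \<and> U \<times> V \<subseteq> W"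
    if W: "openin (prod_topology X Y) W" and z: "z \<in> W" for W z
  proof -
    obtain a b where ab: "z = (a, b)" by (cases z)
    then obtain U V where UV: "openin X U" "openin Y V" "a \<in> U" "b \<in> V" "U \<times> V \<subseteq> W"
      using W z unfolding openin_prod_topology_alt by metis
    obtain U' where "U' \<in> BX" "a \<in> U'" "U' \<subseteq> U" using BX(3) UV by metis
    moreover obtain V' where "V' \<in> BY" "b \<in> V'" "V' \<subseteq> V" using BY(3) UV by metis
    ultimately have "z \<in> U' \<times> V'" "U' \<times> V' \<subseteq> W" using ab UV(5) by auto
    then show ?thesis using \<open>U' \<in> BX\<close> \<open>V' \<in> BY\<close> by blast
  qed
  then show ?thesis using that BX(1,2) BY(1,2) by blast
qed

lemma second_countable_prod_topology:
  assumes "second_countable X" "second_countable Y"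
  shows "second_countable (prod_topology X Y)"
proof -
  obtain BX BY where B: "countable BX" "countable BY"
    "\<And>U. U \<in> BX \<Longrightarrow> openin X U" "\<And>V. V \<in> BY \<Longrightarrow> openin Y V"
    "\<And>W z. openin (prod_topology X Y) W \<Longrightarrow> z \<in> W \<Longrightarrow> \<exists>U\<in>BX. \<exists>V\<in>BY. z \<in> U \<times> V \<and> U \<times> V \<subseteq> W"
    using second_countable_rectangle_base[OF assms] by blast
  show ?thesis unfolding second_countable_def
  proof (intro exI[of _ "(\<lambda>(U, V). U \<times> V) ` (BX \<times> BY)"] conjI ballI allI impI)
    show "countable ((\<lambda>(U, V). U \<times> V) ` (BX \<times> BY))" using B(1,2) by simp
    show "openin (prod_topology X Y) W" if "W \<in> (\<lambda>(U, V). U \<times> V) ` (BX \<times> BY)" for W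
      using that B(3,4) by (auto simp: openin_prod_Times_iff)
    show "\<exists>R\<in>(\<lambda>(U, V). U \<times> V) ` (BX \<times> BY). z \<in> R \<and> R \<subseteq> W"
      if Wz: "openin (prod_topology X Y) W \<and> z \<in> W" for W z
    proof -
      obtain U V where "U \<in> BX" "V \<in> BY" "z \<in> U \<times> V" "U \<times> V \<subseteq> W"
        using B(5)[of W z] Wz by blast
      then show ?thesis by (intro bexI[of _ "U \<times> V"]) auto
    qed
  qed
qed

text \<open>Second countability makes every open set of the product a countable union of open
  rectangles.\<close>
lemma openin_prod_topology_in_sets_pair_measure:
  assumes "second_countable X" "second_countable Y"
    and X: "\<And>U. openin X U \<Longrightarrow> U \<in> sets MX"
    and Y: "\<And>V. openin Y V \<Longrightarrow> V \<in> sets MY"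
    and W: "openin (prod_topology X Y) W"
  shows "W \<in> sets (MX \<Otimes>\<^sub>M MY)"
proof -
  obtain BX BY where B: "countable BX" "countable BY"
    "\<And>U. U \<in> BX \<Longrightarrow> openin X U" "\<And>V. V \<in> BY \<Longrightarrow> openin Y V"
    "\<And>W z. openin (prod_topology X Y) W \<Longrightarrow> z \<in> W \<Longrightarrow> \<exists>U\<in>BX. \<exists>V\<in>BY. z \<in> U \<times> V \<and> U \<times> V \<subseteq> W"
    using second_countable_rectangle_base[OF assms(1,2)] by blast
  define R where "R = (\<lambda>(U, V). U \<times> V) ` {(U, V). U \<in> BX \<and> V \<in> BY \<and> U \<times> V \<subseteq> W}"
  have "{(U, V). U \<in> BX \<and> V \<in> BY \<and> U \<times> V \<subseteq> W} \<subseteq> BX \<times> BY" by auto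
  then have countable_R: "countable R"
    unfolding R_def using B(1,2) by (meson countable_SIGMA countable_image countable_subset)
  have sets_R: "R \<subseteq> sets (MX \<Otimes>\<^sub>M MY)"
    unfolding R_def using B(3,4) X Y by (auto intro!: pair_measureI)
  have "W = \<Union>R"
  proof
    show "W \<subseteq> \<Union>R"
    proof
      fix z assume "z \<in> W"
      then obtain U V where "U \<in> BX" "V \<in> BY" "z \<in> U \<times> V" "U \<times> V \<subseteq> W"
        using B(5)[OF W] by blast
      then have "U \<times> V \<in> R" "z \<in> U \<times> V" unfolding R_def by (auto intro!: image_eqI[where x = "(U, V)"])
      then show "z \<in> \<Union>R" by blast
    qed
    show "\<Union>R \<subseteq> W" unfolding R_def by auto
  qed
  then show ?thesis using sets.countable_Union[OF countable_R sets_R] by simp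
qed

lemma sets_borel_of_subtopology_subset:
  assumes open_sets: "\<And>U. openin X U \<Longrightarrow> U \<in> sets M"
    and A: "A \<in> sets M"
  shows "sets (borel_of (subtopology X A)) \<subseteq> sets M"
proof
  fix B assume "B \<in> sets (borel_of (subtopology X A))"
  then have "B \<in> sigma_sets (topspace X \<inter> A) {V. openin (subtopology X A) V}"
    unfolding sets_borel_of by simp
  then show "B \<in> sets M"
  proof induct
    case (Basic V)
    then obtain U where "openin X U" "V = U \<inter> A" unfolding openin_subtopology by auto
    then show ?case using open_sets A by auto
  next
    case (Compl V)
    then show ?case using A open_sets[OF openin_topspace] by auto
  qed auto
qed

text \<open>The diagonal is closed in a Hausdorff space; second countability puts its complement
  into the product \<sigma>-algebra.\<close>
lemma sets_Collect_eq_borel_of: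
  assumes Y: "Hausdorff_space Y" "second_countable Y"
    and f: "f \<in> measurable M (borel_of Y)" and h: "h \<in> measurable M (borel_of Y)"
  shows "{x \<in> space M. f x = h x} \<in> sets M"
proof -
  define Od where "Od = topspace Y \<times> topspace Y - (\<lambda>x. (x, x)) ` topspace Y"
  have open_Od: "openin (prod_topology Y Y) Od"
    using Y(1) unfolding Hausdorff_space_closedin_diagonal closedin_def Od_def topspace_prod_topology
    by blast
  have Od: "Od \<in> sets (borel_of Y \<Otimes>\<^sub>M borel_of Y)"
    by (rule openin_prod_topology_in_sets_pair_measure[OF Y(2) Y(2) _ _ open_Od])
       (simp_all add: openin_in_borel_of)
  have fh: "(\<lambda>x. (f x, h x)) \<in> measurable M (borel_of Y \<Otimes>\<^sub>M borel_of Y)"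
    using f h by (rule measurable_Pair)
  have "f x \<in> topspace Y" "h x \<in> topspace Y" if "x \<in> space M" for x
    using measurable_space[OF f that] measurable_space[OF h that] by auto
  then have "{x \<in> space M. f x = h x} = space M - ((\<lambda>x. (f x, h x)) -` Od \<inter> space M)"
    unfolding Od_def by auto
  also have "\<dots> \<in> sets M" using measurable_sets[OF fh Od] by auto
  finally show ?thesis .
qed

lemma emeasure_return_pair_measure:
  assumes N: "sigma_finite_measure N" and h: "h \<in> space B" and Y: "Y \<in> sets (B \<Otimes>\<^sub>M N)"
  shows "emeasure (return B h \<Otimes>\<^sub>M N) Y = emeasure N (Pair h -` Y)"
proof -
  have sets_eq: "sets (return B h \<Otimes>\<^sub>M N) = sets (B \<Otimes>\<^sub>M N)"
    by (intro sets_pair_measure_cong sets_return refl)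
  have "emeasure (return B h \<Otimes>\<^sub>M N) Y = (\<integral>\<^sup>+ h'. emeasure N (Pair h' -` Y) \<partial>return B h)"
    using Y sets_eq by (intro sigma_finite_measure.emeasure_pair_measure_alt[OF N]) simp
  also have "\<dots> = emeasure N (Pair h -` Y)"
    using sigma_finite_measure.measurable_emeasure_Pair[OF N Y] h
    by (intro nn_integral_return) (simp_all cong: measurable_cong_sets)
  finally show ?thesis .
qed

lemma
  assumes N: "sigma_finite_measure N" and h: "h \<in> space B" and Z: "Z \<in> sets (M \<Otimes>\<^sub>M (B \<Otimes>\<^sub>M N))"
  shows emeasure_pair_measure_return_middle:
      "emeasure (M \<Otimes>\<^sub>M (return B h \<Otimes>\<^sub>M N)) Z = (\<integral>\<^sup>+ \<sigma>. emeasure N {\<tau>. (\<sigma>, h, \<tau>) \<in> Z} \<partial>M)"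
    and measurable_emeasure_middle_slice:
      "(\<lambda>\<sigma>. emeasure N {\<tau>. (\<sigma>, h, \<tau>) \<in> Z}) \<in> borel_measurable M"
proof -
  have sf: "sigma_finite_measure (return B h \<Otimes>\<^sub>M N)"
    by (intro sigma_finite_pair_measure prob_space_imp_sigma_finite prob_space_return h N)
  have Z': "Z \<in> sets (M \<Otimes>\<^sub>M (return B h \<Otimes>\<^sub>M N))"
    using Z by (simp cong: sets_pair_measure_cong)
  have slice: "emeasure (return B h \<Otimes>\<^sub>M N) (Pair \<sigma> -` Z) = emeasure N {\<tau>. (\<sigma>, h, \<tau>) \<in> Z}" for \<sigma>
    using emeasure_return_pair_measure[OF N h sets_Pair1[OF Z]] by (simp add: vimage_def)
  show "emeasure (M \<Otimes>\<^sub>M (return B h \<Otimes>\<^sub>M N)) Z = (\<integral>\<^sup>+ \<sigma>. emeasure N {\<tau>. (\<sigma>, h, \<tau>) \<in> Z} \<partial>M)"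
    using sigma_finite_measure.emeasure_pair_measure_alt[OF sf Z'] by (simp add: slice)
  show "(\<lambda>\<sigma>. emeasure N {\<tau>. (\<sigma>, h, \<tau>) \<in> Z}) \<in> borel_measurable M"
    using sigma_finite_measure.measurable_emeasure_Pair[OF sf Z'] by (simp add: slice)
qed

lemma groupoid_units:
  assumes "groupoid G" "x \<in> garr G"
  shows "grng G x \<in> gunits G" "gdom G x \<in> gunits G" "grng G x \<in> garr G" "gdom G x \<in> garr G"
  using assms unfolding groupoid_def by blast+

lemma groupoid_mult:
  assumes "groupoid G" "x \<in> garr G" "y \<in> garr G" "gdom G x = grng G y"
  shows "gmult G x y \<in> garr G" "grng G (gmult G x y) = grng G x" "gdom G (gmult G x y) = gdom G y"
proof -
  have "(x, y) \<in> composable G" using assms unfolding composable_def by simp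
  then show "gmult G x y \<in> garr G" "grng G (gmult G x y) = grng G x"
    "gdom G (gmult G x y) = gdom G y"
    using assms(1) unfolding groupoid_def by auto
qed

lemma groupoid_assoc:
  assumes "groupoid G" "x \<in> garr G" "y \<in> garr G" "z \<in> garr G"
    "gdom G x = grng G y" "gdom G y = grng G z"
  shows "gmult G (gmult G x y) z = gmult G x (gmult G y z)"
proof -
  have "(x, y) \<in> composable G" "(y, z) \<in> composable G"
    using assms unfolding composable_def by simp_all
  then show ?thesis using assms(1) unfolding groupoid_def by blast
qed

lemma groupoid_unit_mult:
  assumes "groupoid G" "x \<in> garr G"
  shows "gmult G (grng G x) x = x" "gmult G x (gdom G x) = x"
  using assms unfolding groupoid_def by blast+

lemma groupoid_inv:
  assumes "groupoid G" "x \<in> garr G"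
  shows "ginv G x \<in> garr G" "grng G (ginv G x) = gdom G x" "gdom G (ginv G x) = grng G x"
    "gmult G x (ginv G x) = grng G x" "gmult G (ginv G x) x = gdom G x"
  using assms unfolding groupoid_def by auto

lemma groupoid_inv_mult_cancel:
  assumes G: "groupoid G" and a: "a \<in> garr G" and \<sigma>: "\<sigma> \<in> garr G" "grng G \<sigma> = gdom G a"
  shows "gmult G (ginv G a) (gmult G a \<sigma>) = \<sigma>"
proof -
  have "gmult G (ginv G a) (gmult G a \<sigma>) = gmult G (gmult G (ginv G a) a) \<sigma>"
    using groupoid_assoc[OF G groupoid_inv(1)[OF G a] a \<sigma>(1)] groupoid_inv[OF G a] \<sigma> by simp
  also have "\<dots> = \<sigma>" using groupoid_inv(5)[OF G a] groupoid_unit_mult[OF G \<sigma>(1)] \<sigma>(2) by simp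
  finally show ?thesis .
qed

lemma groupoid_mult_inv_cancel:
  assumes G: "groupoid G" and a: "a \<in> garr G" and \<sigma>: "\<sigma> \<in> garr G" "grng G \<sigma> = grng G a"
  shows "gmult G a (gmult G (ginv G a) \<sigma>) = \<sigma>"
proof -
  have "gmult G a (gmult G (ginv G a) \<sigma>) = gmult G (gmult G a (ginv G a)) \<sigma>"
    using groupoid_assoc[OF G a groupoid_inv(1)[OF G a] \<sigma>(1)] groupoid_inv[OF G a] \<sigma> by simp
  also have "\<dots> = \<sigma>" using groupoid_inv(4)[OF G a] groupoid_unit_mult[OF G \<sigma>(1)] \<sigma>(2) by simp
  finally show ?thesis .
qed

lemma groupoid_left_translate_rfibre:
  assumes G: "groupoid G" and a: "a \<in> garr G"
  shows "gmult G a ` (B \<inter> rfibre G (gdom G a))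
    = {\<sigma> \<in> rfibre G (grng G a). gmult G (ginv G a) \<sigma> \<in> B}"
proof (intro set_eqI iffI)
  fix \<sigma> assume "\<sigma> \<in> gmult G a ` (B \<inter> rfibre G (gdom G a))"
  then obtain \<rho> where \<rho>: "\<rho> \<in> B" "\<rho> \<in> garr G" "grng G \<rho> = gdom G a" "\<sigma> = gmult G a \<rho>"
    unfolding rfibre_def by auto
  then show "\<sigma> \<in> {\<sigma> \<in> rfibre G (grng G a). gmult G (ginv G a) \<sigma> \<in> B}"
    using groupoid_mult[OF G a \<rho>(2) \<rho>(3)[symmetric]] groupoid_inv_mult_cancel[OF G a \<rho>(2,3)]
    unfolding rfibre_def by simp
next
  fix \<sigma> assume "\<sigma> \<in> {\<sigma> \<in> rfibre G (grng G a). gmult G (ginv G a) \<sigma> \<in> B}"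
  then have \<sigma>: "\<sigma> \<in> garr G" "grng G \<sigma> = grng G a" "gmult G (ginv G a) \<sigma> \<in> B"
    unfolding rfibre_def by auto
  have "gmult G (ginv G a) \<sigma> \<in> rfibre G (gdom G a)"
    using groupoid_mult[OF G groupoid_inv(1)[OF G a] \<sigma>(1)] groupoid_inv[OF G a] \<sigma>(2)
    unfolding rfibre_def by simp
  then show "\<sigma> \<in> gmult G a ` (B \<inter> rfibre G (gdom G a))"
    using groupoid_mult_inv_cancel[OF G a \<sigma>(1,2)] \<sigma>(3) by (metis IntI image_eqI)
qed

lemma locally_compact_Hausdorff_bump:
  assumes lc: "locally_compact_space X" and Hd: "Hausdorff_space X" and y: "y \<in> topspace X"
  obtains f :: "'a \<Rightarrow> real" and V
  where "continuous_map X euclideanreal f" "\<forall>x\<in>topspace X. 0 \<le> f x"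
    "compactin X (X closure_of {x \<in> topspace X. f x \<noteq> 0})"
    "openin X V" "y \<in> V" "\<forall>x\<in>V. 1 \<le> f x"
proof -
  obtain U K where UK: "openin X U" "compactin X K" "y \<in> U" "U \<subseteq> K"
    using lc y unfolding locally_compact_space_def by blast
  have "completely_regular_space X"
    using lc Hd locally_compact_regular_imp_completely_regular_space by blast
  moreover have "closedin X (topspace X - U)" using UK(1) by blast
  moreover have "y \<in> topspace X - (topspace X - U)" using y UK(3) by blast
  ultimately obtain h :: "'a \<Rightarrow> real" where h: "continuous_map X (top_of_set {0..1}) h"
    "h y = 0" "h ` (topspace X - U) \<subseteq> {1}"
    unfolding completely_regular_space_def by meson
  have hc: "continuous_map X euclideanreal h"
    using h(1) continuous_map_in_subtopology by blast
  define f where "f z = max 0 (2 - 4 * h z)" for z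
  define V where "V = {z \<in> topspace X. h z \<in> {..<1/4}}"
  define C where "C = {z \<in> topspace X. h z \<in> {..1/2}}"
  have "closedin X C"
    unfolding C_def by (rule closedin_continuous_map_preimage[OF hc]) simp
  moreover have "C \<subseteq> U" using h(3) unfolding C_def by force
  moreover have "{x \<in> topspace X. f x \<noteq> 0} \<subseteq> C"
    unfolding C_def f_def by (auto simp: max_def split: if_splits)
  ultimately have "X closure_of {x \<in> topspace X. f x \<noteq> 0} \<subseteq> K"
    using closure_of_minimal UK(4) by (meson order_trans)
  then have "compactin X (X closure_of {x \<in> topspace X. f x \<noteq> 0})"
    using closed_compactin[OF UK(2)] closedin_closure_of by meson
  moreover have "continuous_map X euclideanreal f"
    unfolding f_def by (intro continuous_intros hc)
  moreover have "openin X V"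
    unfolding V_def by (rule openin_continuous_map_preimage[OF hc]) simp
  moreover have "y \<in> V" "\<forall>x\<in>V. 1 \<le> f x" using y h(2) unfolding V_def f_def by auto
  ultimately show ?thesis using that[of f V] unfolding f_def by auto
qed

locale lc_haar_system =
  fixes G :: "('a, 'm) topgroupoid_scheme" and lam :: "'a \<Rightarrow> 'a measure"
  assumes topological_groupoid: "topological_groupoid G"
    and second_countable: "second_countable (gtop G)"
    and locally_compact: "locally_compact_space (gtop G)"
    and Hausdorff: "Hausdorff_space (gtop G)"
    and haar_system: "continuous_left_haar_system G lam"

lemma haar_groupoid_imp_lc_haar_system:
  "haar_groupoid G lam mu \<Longrightarrow> lc_haar_system G lam"
  unfolding haar_groupoid_def lc_haar_system_def by blast

context lc_haar_system
begin

lemma groupoid: "groupoid G"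
  using topological_groupoid unfolding topological_groupoid_def by blast

lemma sets_lam:
  assumes "u \<in> gunits G"
  shows "sets (lam u) = sets (borel_of (gtop G))"
  using haar_system assms unfolding continuous_left_haar_system_def borel_measure_on_def by auto

lemma space_lam:
  assumes "u \<in> gunits G"
  shows "space (lam u) = garr G"
  using haar_system assms unfolding continuous_left_haar_system_def borel_measure_on_def by auto

lemma lam_left_invariant:
  assumes "x \<in> garr G" "E \<in> sets (borel_of (gtop G))"
  shows "emeasure (lam (gdom G x)) E = emeasure (lam (grng G x)) (gmult G x ` (E \<inter> rfibre G (gdom G x)))"
  using haar_system assms unfolding continuous_left_haar_system_def by blast

lemma rfibre_in_borel:
  assumes "u \<in> garr G"
  shows "rfibre G u \<in> sets (borel_of (gtop G))"
proof -
  have "closedin (gtop G) {x \<in> garr G. grng G x \<in> {u}}"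
    using topological_groupoid Hausdorff assms closedin_Hausdorff_singleton
    unfolding topological_groupoid_def by (intro closedin_continuous_map_preimage) auto
  then show ?thesis unfolding rfibre_def by (simp add: closedin_in_borel_of)
qed

lemma continuous_map_left_translation:
  assumes a: "a \<in> garr G"
  shows "continuous_map (subtopology (gtop G) (rfibre G (gdom G a))) (gtop G) (gmult G a)"
proof -
  have mult: "continuous_map (subtopology (prod_topology (gtop G) (gtop G)) (composable G)) (gtop G)
      (\<lambda>(x, y). gmult G x y)"
    using topological_groupoid unfolding topological_groupoid_def by blast
  have "continuous_map (subtopology (gtop G) (rfibre G (gdom G a)))
      (subtopology (prod_topology (gtop G) (gtop G)) (composable G)) (\<lambda>\<sigma>. (a, \<sigma>))"
    unfolding continuous_map_in_subtopology using a
    by (auto simp: composable_def rfibre_def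
        intro!: continuous_map_pairedI continuous_map_from_subtopology continuous_map_id[unfolded id_def])
  from continuous_map_compose[OF this mult] show ?thesis by (simp add: o_def)
qed

lemma measurable_left_translation:
  assumes a: "a \<in> garr G"
  shows "(\<lambda>\<sigma>. if \<sigma> \<in> rfibre G (gdom G a) then gmult G a \<sigma> else a)
    \<in> measurable (borel_of (gtop G)) (borel_of (gtop G))"
  using a groupoid_units(4)[OF groupoid a]
  by (intro measurable_piecewise_continuous rfibre_in_borel continuous_map_left_translation)

lemma locally_finite_lam:
  assumes u: "u \<in> gunits G" and y: "y \<in> garr G"
  obtains V where "openin (gtop G) V" "y \<in> V" "emeasure (lam u) V < \<infinity>"
proof -
  obtain f :: "'a \<Rightarrow> real" and V where f: "continuous_map (gtop G) euclideanreal f"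
    "\<forall>x\<in>garr G. 0 \<le> f x" "compactin (gtop G) ((gtop G) closure_of {x \<in> garr G. f x \<noteq> 0})"
    and V: "openin (gtop G) V" "y \<in> V" "\<forall>x\<in>V. 1 \<le> f x"
    using locally_compact_Hausdorff_bump[OF locally_compact Hausdorff y] by blast
  have "emeasure (lam u) V = (\<integral>\<^sup>+ x. indicator V x \<partial>lam u)"
    using V(1) sets_lam[OF u] by (simp add: openin_in_borel_of)
  also have "\<dots> \<le> (\<integral>\<^sup>+ x. ennreal (f x) \<partial>lam u)"
    using V(3) by (intro nn_integral_mono) (auto split: split_indicator)
  also have "\<dots> < \<infinity>"
    using haar_system f u unfolding continuous_left_haar_system_def by blast
  finally show ?thesis using that V(1,2) by blast
qed

lemma sigma_finite_lam:
  assumes u: "u \<in> gunits G"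
  shows "sigma_finite_measure (lam u)"
proof -
  define \<U> where "\<U> = {V. openin (gtop G) V \<and> emeasure (lam u) V < \<infinity>}"
  have "\<forall>V\<in>\<U>. openin (gtop G) V" unfolding \<U>_def by blast
  moreover have "\<Union>\<U> = garr G"
  proof
    show "\<Union>\<U> \<subseteq> garr G" unfolding \<U>_def using openin_subset by blast
    show "garr G \<subseteq> \<Union>\<U>"
    proof
      fix y assume "y \<in> garr G"
      then obtain V where "openin (gtop G) V" "y \<in> V" "emeasure (lam u) V < \<infinity>"
        using locally_finite_lam[OF u] by blast
      then show "y \<in> \<Union>\<U>" unfolding \<U>_def by blast
    qed
  qed
  ultimately obtain \<V> where \<V>: "countable \<V>" "\<V> \<subseteq> \<U>" "\<Union>\<V> = garr G"
    using second_countable_imp_Lindelof_space[OF second_countable]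
    unfolding Lindelof_space_def by metis
  show ?thesis
    unfolding sigma_finite_measure_def
  proof (intro exI[of _ \<V>] conjI)
    show "\<V> \<subseteq> sets (lam u)"
      using \<V>(2) sets_lam[OF u] openin_in_borel_of unfolding \<U>_def by auto
    show "\<forall>V\<in>\<V>. emeasure (lam u) V \<noteq> \<infinity>" using \<V>(2) unfolding \<U>_def by auto
    show "\<Union>\<V> = space (lam u)" using \<V>(3) space_lam[OF u] by simp
  qed (rule \<V>(1))
qed

text \<open>Left invariance says that \<open>\<lambda>^{d a}\<close> is the image of \<open>\<lambda>^{r a}\<close>, restricted to the fibre
  \<open>G^{r a}\<close>, under left translation by \<open>a\<inverse>\<close>.\<close>
lemma nn_integral_left_translation:
  assumes a: "a \<in> garr G" and f: "f \<in> borel_measurable (borel_of (gtop G))"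
  shows "(\<integral>\<^sup>+ \<sigma>. f \<sigma> \<partial>lam (gdom G a))
    = (\<integral>\<^sup>+ \<sigma>. indicator (rfibre G (grng G a)) \<sigma> * f (gmult G (ginv G a) \<sigma>) \<partial>lam (grng G a))"
proof -
  let ?B = "borel_of (gtop G)" and ?R = "rfibre G (grng G a)"
  define L where "L \<sigma> = (if \<sigma> \<in> ?R then gmult G (ginv G a) \<sigma> else ginv G a)" for \<sigma>
  define D where "D = density (lam (grng G a)) (indicator ?R)"
  have units: "grng G a \<in> gunits G" "gdom G a \<in> gunits G" "grng G a \<in> garr G"
    using groupoid_units[OF groupoid a] by auto
  have L: "L \<in> measurable ?B ?B"
    using measurable_left_translation[OF groupoid_inv(1)[OF groupoid a]] groupoid_inv(3)[OF groupoid a]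
    unfolding L_def by simp
  have R: "?R \<in> sets (lam (grng G a))"
    using rfibre_in_borel[OF units(3)] sets_lam[OF units(1)] by simp
  have sets_D: "sets D = sets ?B" unfolding D_def using sets_lam[OF units(1)] by simp
  have distr_D: "distr D ?B L = lam (gdom G a)"
  proof (rule measure_eqI)
    show "sets (distr D ?B L) = sets (lam (gdom G a))" using sets_lam[OF units(2)] by simp
    fix A assume "A \<in> sets (distr D ?B L)"
    then have A: "A \<in> sets ?B" by simp
    have LA: "L -` A \<inter> garr G \<in> sets (lam (grng G a))"
      using measurable_sets[OF L A] sets_lam[OF units(1)] by simp
    have "emeasure (distr D ?B L) A = emeasure (lam (grng G a)) (?R \<inter> (L -` A \<inter> garr G))"
      using emeasure_distr[OF L[folded measurable_cong_sets[OF sets_D refl]] A]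
        emeasure_restricted[OF R LA] space_lam[OF units(1)] sets_D
      unfolding D_def by (simp cong: measurable_cong_sets)
    also have "?R \<inter> (L -` A \<inter> garr G) = {\<sigma> \<in> ?R. gmult G (ginv G a) \<sigma> \<in> A}"
      unfolding L_def rfibre_def by auto
    also have "\<dots> = gmult G a ` (A \<inter> rfibre G (gdom G a))"
      by (rule groupoid_left_translate_rfibre[OF groupoid a, symmetric])
    also have "emeasure (lam (grng G a)) \<dots> = emeasure (lam (gdom G a)) A"
      using lam_left_invariant[OF a A] by simp
    finally show "emeasure (distr D ?B L) A = emeasure (lam (gdom G a)) A" .
  qed
  have "(\<integral>\<^sup>+ \<sigma>. f \<sigma> \<partial>lam (gdom G a)) = (\<integral>\<^sup>+ \<sigma>. f (L \<sigma>) \<partial>D)"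
    using nn_integral_distr[OF L[folded measurable_cong_sets[OF sets_D refl]]]
      f[folded measurable_cong_sets[OF sets_lam[OF units(2)] refl]]
    unfolding distr_D by simp
  also have "\<dots> = (\<integral>\<^sup>+ \<sigma>. indicator ?R \<sigma> * f (L \<sigma>) \<partial>lam (grng G a))"
    unfolding D_def using R measurable_compose[OF L f] sets_lam[OF units(1)]
    by (intro nn_integral_density) (simp_all cong: measurable_cong_sets)
  also have "\<dots> = (\<integral>\<^sup>+ \<sigma>. indicator ?R \<sigma> * f (gmult G (ginv G a) \<sigma>) \<partial>lam (grng G a))"
    unfolding L_def by (intro nn_integral_cong) (simp split: split_indicator)
  finally show ?thesis .
qed

end

locale lc_haar_system_pair =
  S: lc_haar_system S lamS + T: lc_haar_system T lamT
  for S :: "('a, 'm) topgroupoid_scheme" and lamS :: "'a \<Rightarrow> 'a measure"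
    and T :: "('c, 'k) topgroupoid_scheme" and lamT :: "'c \<Rightarrow> 'c measure"
begin

lemma sets_left_translate_triple:
  assumes a: "a \<in> garr S" and b: "b \<in> garr T" and h: "h \<in> space B" "{h} \<in> sets B"
    and k: "k \<in> space B"
    and E: "E \<in> sets (borel_of (gtop S) \<Otimes>\<^sub>M (B \<Otimes>\<^sub>M borel_of (gtop T)))"
  shows "{(\<sigma>, h, \<tau>) | \<sigma> \<tau>. \<sigma> \<in> rfibre S (gdom S a) \<and> \<tau> \<in> rfibre T (gdom T b)
      \<and> (gmult S a \<sigma>, k, gmult T b \<tau>) \<in> E}
    \<in> sets (borel_of (gtop S) \<Otimes>\<^sub>M (B \<Otimes>\<^sub>M borel_of (gtop T)))"
    (is "?F \<in> sets ?P")
proof -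
  define La where "La \<sigma> = (if \<sigma> \<in> rfibre S (gdom S a) then gmult S a \<sigma> else a)" for \<sigma>
  define Lb where "Lb \<tau> = (if \<tau> \<in> rfibre T (gdom T b) then gmult T b \<tau> else b)" for \<tau>
  define \<Phi> where "\<Phi> y = (La (fst y), k, Lb (snd (snd y)))" for y :: "'a \<times> 'b \<times> 'c"
  have fst: "fst \<in> measurable ?P (borel_of (gtop S))"
    and fst_snd: "(\<lambda>y. fst (snd y)) \<in> measurable ?P B"
    and snd_snd: "(\<lambda>y. snd (snd y)) \<in> measurable ?P (borel_of (gtop T))"
    by simp_all
  have "\<Phi> \<in> measurable ?P ?P"
    unfolding \<Phi>_def La_def Lb_def using k
    by (intro measurable_Pair measurable_const
        measurable_compose[OF fst S.measurable_left_translation[OF a]]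
        measurable_compose[OF snd_snd T.measurable_left_translation[OF b]])
  then have "\<Phi> -` E \<inter> space ?P \<in> sets ?P" using E by (rule measurable_sets)
  moreover have "fst -` rfibre S (gdom S a) \<inter> space ?P \<in> sets ?P"
    using measurable_sets[OF fst S.rfibre_in_borel] groupoid_units(4)[OF S.groupoid a] by blast
  moreover have "(\<lambda>y. fst (snd y)) -` {h} \<inter> space ?P \<in> sets ?P"
    using measurable_sets[OF fst_snd h(2)] .
  moreover have "(\<lambda>y. snd (snd y)) -` rfibre T (gdom T b) \<inter> space ?P \<in> sets ?P"
    using measurable_sets[OF snd_snd T.rfibre_in_borel] groupoid_units(4)[OF T.groupoid b] by blast
  moreover have "?F = (fst -` rfibre S (gdom S a) \<inter> space ?P) \<inter> ((\<lambda>y. fst (snd y)) -` {h} \<inter> space ?P)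
      \<inter> ((\<lambda>y. snd (snd y)) -` rfibre T (gdom T b) \<inter> space ?P) \<inter> (\<Phi> -` E \<inter> space ?P)"
    using h(1) unfolding \<Phi>_def La_def Lb_def by (auto simp: space_pair_measure rfibre_def)
  ultimately show ?thesis by simp
qed


lemma emeasure_left_translate_triple:
  assumes s: "s \<in> garr S" and t: "t \<in> garr T" and h: "h \<in> space B" "{h} \<in> sets B"
    and k: "k \<in> space B"
    and E: "E \<in> sets (borel_of (gtop S) \<Otimes>\<^sub>M (B \<Otimes>\<^sub>M borel_of (gtop T)))"
  shows "emeasure (lamS (gdom S s) \<Otimes>\<^sub>M (return B k \<Otimes>\<^sub>M lamT (gdom T t))) E
    = emeasure (lamS (grng S s) \<Otimes>\<^sub>M (return B h \<Otimes>\<^sub>M lamT (grng T t)))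
        {(\<sigma>, h, \<tau>) | \<sigma> \<tau>. \<sigma> \<in> rfibre S (grng S s) \<and> \<tau> \<in> rfibre T (grng T t)
          \<and> (gmult S (ginv S s) \<sigma>, k, gmult T (ginv T t) \<tau>) \<in> E}"
    (is "_ = emeasure _ ?F")
proof -
  let ?P = "borel_of (gtop S) \<Otimes>\<^sub>M (B \<Otimes>\<^sub>M borel_of (gtop T))"
  define \<phi> where "\<phi> \<sigma> = emeasure (lamT (gdom T t)) {\<tau>. (\<sigma>, k, \<tau>) \<in> E}" for \<sigma>
  have units: "grng S s \<in> gunits S" "gdom S s \<in> gunits S" "grng T t \<in> gunits T" "gdom T t \<in> gunits T"
    using groupoid_units[OF S.groupoid s] groupoid_units[OF T.groupoid t] by auto
  have sets_P: "sets (M \<Otimes>\<^sub>M (B \<Otimes>\<^sub>M lamT v)) = sets ?P"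
    if "sets M = sets (borel_of (gtop S))" "v \<in> gunits T" for M v
    using that T.sets_lam[OF that(2)] by (intro sets_pair_measure_cong refl)
  have F: "?F \<in> sets ?P"
    using sets_left_translate_triple[OF groupoid_inv(1)[OF S.groupoid s] groupoid_inv(1)[OF T.groupoid t] h k E]
    by (simp add: groupoid_inv(3)[OF S.groupoid s] groupoid_inv(3)[OF T.groupoid t])
  have slice_E: "{\<tau>. (\<sigma>, k, \<tau>) \<in> E} \<in> sets (borel_of (gtop T))" for \<sigma>
    using sets_Pair1[OF sets_Pair1[OF E]] by (simp add: vimage_def)
  have slice_F: "emeasure (lamT (grng T t)) {\<tau>. (\<sigma>, h, \<tau>) \<in> ?F}
      = indicator (rfibre S (grng S s)) \<sigma> * \<phi> (gmult S (ginv S s) \<sigma>)" for \<sigma>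
  proof (cases "\<sigma> \<in> rfibre S (grng S s)")
    case True
    then have "{\<tau>. (\<sigma>, h, \<tau>) \<in> ?F}
        = {\<tau> \<in> rfibre T (grng T t). gmult T (ginv T t) \<tau> \<in> {\<tau>. (gmult S (ginv S s) \<sigma>, k, \<tau>) \<in> E}}"
      by blast
    also have "\<dots> = gmult T t ` ({\<tau>. (gmult S (ginv S s) \<sigma>, k, \<tau>) \<in> E} \<inter> rfibre T (gdom T t))"
      by (rule groupoid_left_translate_rfibre[OF T.groupoid t, symmetric])
    finally show ?thesis
      using T.lam_left_invariant[OF t slice_E] True unfolding \<phi>_def by simp
  qed simp
  have "emeasure (lamS (gdom S s) \<Otimes>\<^sub>M (return B k \<Otimes>\<^sub>M lamT (gdom T t))) E
      = (\<integral>\<^sup>+ \<sigma>. \<phi> \<sigma> \<partial>lamS (gdom S s))"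
    unfolding \<phi>_def using E sets_P[OF S.sets_lam[OF units(2)] units(4)]
    by (intro emeasure_pair_measure_return_middle T.sigma_finite_lam units k) simp
  also have "\<dots> = (\<integral>\<^sup>+ \<sigma>. indicator (rfibre S (grng S s)) \<sigma> * \<phi> (gmult S (ginv S s) \<sigma>) \<partial>lamS (grng S s))"
    unfolding \<phi>_def using E
    by (intro S.nn_integral_left_translation s measurable_emeasure_middle_slice[where B = B]
        T.sigma_finite_lam units k)
       (simp add: sets_P[OF refl units(4)])
  also have "\<dots> = (\<integral>\<^sup>+ \<sigma>. emeasure (lamT (grng T t)) {\<tau>. (\<sigma>, h, \<tau>) \<in> ?F} \<partial>lamS (grng S s))"
    by (simp only: slice_F)
  also have "\<dots> = emeasure (lamS (grng S s) \<Otimes>\<^sub>M (return B h \<Otimes>\<^sub>M lamT (grng T t))) ?F"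
    using F sets_P[OF S.sets_lam[OF units(1)] units(3)]
    by (intro emeasure_pair_measure_return_middle[symmetric] T.sigma_finite_lam units h) simp
  finally show ?thesis .
qed

end

lemma wpb_arr_in_sets:
  assumes G: "topological_groupoid G" "Hausdorff_space (gtop G)" "second_countable (gtop G)"
    and p: "continuous_map (gtop S) (gtop G) p" and q: "continuous_map (gtop T) (gtop G) q"
  shows "wpb_arr S G T p q \<in> sets (borel_of (gtop S) \<Otimes>\<^sub>M (borel_of (gtop G) \<Otimes>\<^sub>M borel_of (gtop T)))"
    (is "_ \<in> sets ?P")
proof -
  have rng: "continuous_map (gtop G) (gtop G) (grng G)" and dom: "continuous_map (gtop G) (gtop G) (gdom G)"
    using G(1) unfolding topological_groupoid_def by auto
  have fst: "fst \<in> measurable ?P (borel_of (gtop S))"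
    and fst_snd: "(\<lambda>y. fst (snd y)) \<in> measurable ?P (borel_of (gtop G))"
    and snd_snd: "(\<lambda>y. snd (snd y)) \<in> measurable ?P (borel_of (gtop T))"
    by simp_all
  have "(\<lambda>y. grng G (p (fst y))) \<in> measurable ?P (borel_of (gtop G))"
    using measurable_compose[OF fst continuous_map_measurable[OF continuous_map_compose[OF p rng]]]
    by (simp add: o_def)
  then have "{y \<in> space ?P. grng G (fst (snd y)) = grng G (p (fst y))} \<in> sets ?P"
    using measurable_compose[OF fst_snd continuous_map_measurable[OF rng]]
    by (intro sets_Collect_eq_borel_of[OF G(2,3)])
  moreover have "(\<lambda>y. grng G (q (snd (snd y)))) \<in> measurable ?P (borel_of (gtop G))"
    using measurable_compose[OF snd_snd continuous_map_measurable[OF continuous_map_compose[OF q rng]]]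
    by (simp add: o_def)
  then have "{y \<in> space ?P. gdom G (fst (snd y)) = grng G (q (snd (snd y)))} \<in> sets ?P"
    using measurable_compose[OF fst_snd continuous_map_measurable[OF dom]]
    by (intro sets_Collect_eq_borel_of[OF G(2,3)])
  moreover have "wpb_arr S G T p q = {y \<in> space ?P. grng G (fst (snd y)) = grng G (p (fst y))}
      \<inter> {y \<in> space ?P. gdom G (fst (snd y)) = grng G (q (snd (snd y)))}"
    unfolding wpb_arr_def by (auto simp: space_pair_measure)
  ultimately show ?thesis by simp
qed

lemma sets_borel_of_wpb_top:
  assumes "second_countable (gtop S)" "second_countable (gtop G)" "second_countable (gtop T)"
    and arr: "wpb_arr S G T p q \<in> sets (borel_of (gtop S) \<Otimes>\<^sub>M (borel_of (gtop G) \<Otimes>\<^sub>M borel_of (gtop T)))"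
  shows "sets (borel_of (wpb_top S G T p q))
    \<subseteq> sets (borel_of (gtop S) \<Otimes>\<^sub>M (borel_of (gtop G) \<Otimes>\<^sub>M borel_of (gtop T)))"
  unfolding wpb_top_def
proof (rule sets_borel_of_subtopology_subset[OF _ arr])
  have GT: "V \<in> sets (borel_of (gtop G) \<Otimes>\<^sub>M borel_of (gtop T))"
    if "openin (prod_topology (gtop G) (gtop T)) V" for V
    by (rule openin_prod_topology_in_sets_pair_measure[OF assms(2,3) _ _ that])
       (simp_all add: openin_in_borel_of)
  show "U \<in> sets (borel_of (gtop S) \<Otimes>\<^sub>M (borel_of (gtop G) \<Otimes>\<^sub>M borel_of (gtop T)))"
    if "openin (prod_topology (gtop S) (prod_topology (gtop G) (gtop T))) U" for U
    by (rule openin_prod_topology_in_sets_pair_measure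
        [OF assms(1) second_countable_prod_topology[OF assms(2,3)] _ _ that])
       (simp_all add: openin_in_borel_of GT)
qed

lemma wpb_mult_image_rfibre:
  assumes S: "groupoid S" and T: "groupoid T" and s: "s \<in> garr S" and t: "t \<in> garr T"
    and E: "E \<subseteq> wpb_arr S G T p q"
  shows "wpb_mult S T (s, g, t) ` (E \<inter> {y \<in> wpb_arr S G T p q. wpb_rng S T y = wpb_dom S G T p q (s, g, t)})
    = {(\<sigma>, g, \<tau>) | \<sigma> \<tau>. \<sigma> \<in> rfibre S (grng S s) \<and> \<tau> \<in> rfibre T (grng T t)
        \<and> (gmult S (ginv S s) \<sigma>, gmult G (gmult G (ginv G (p s)) g) (q t), gmult T (ginv T t) \<tau>) \<in> E}"
  (is "?L = ?R")
proof
  show "?L \<subseteq> ?R"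
  proof
    fix z assume "z \<in> ?L"
    then obtain \<sigma> h \<tau> where y: "(\<sigma>, h, \<tau>) \<in> E" "(\<sigma>, h, \<tau>) \<in> wpb_arr S G T p q"
      "wpb_rng S T (\<sigma>, h, \<tau>) = wpb_dom S G T p q (s, g, t)" "z = wpb_mult S T (s, g, t) (\<sigma>, h, \<tau>)"
      by auto
    then have \<sigma>: "\<sigma> \<in> garr S" "grng S \<sigma> = gdom S s" and \<tau>: "\<tau> \<in> garr T" "grng T \<tau> = gdom T t"
      and h: "h = gmult G (gmult G (ginv G (p s)) g) (q t)"
      unfolding wpb_arr_def wpb_rng_def wpb_dom_def by auto
    show "z \<in> ?R"
      using y(1,4) h groupoid_mult[OF S s \<sigma>(1) \<sigma>(2)[symmetric]] groupoid_mult[OF T t \<tau>(1) \<tau>(2)[symmetric]]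
        groupoid_inv_mult_cancel[OF S s \<sigma>] groupoid_inv_mult_cancel[OF T t \<tau>]
      unfolding wpb_mult_def rfibre_def by auto
  qed
next
  show "?R \<subseteq> ?L"
  proof
    fix z assume "z \<in> ?R"
    then obtain \<sigma> \<tau> where z: "z = (\<sigma>, g, \<tau>)" and \<sigma>: "\<sigma> \<in> garr S" "grng S \<sigma> = grng S s"
      and \<tau>: "\<tau> \<in> garr T" "grng T \<tau> = grng T t"
      and y: "(gmult S (ginv S s) \<sigma>, gmult G (gmult G (ginv G (p s)) g) (q t), gmult T (ginv T t) \<tau>) \<in> E"
      (is "?y \<in> E")
      unfolding rfibre_def by blast
    have "wpb_rng S T ?y = wpb_dom S G T p q (s, g, t)"
      using groupoid_mult[OF S groupoid_inv(1)[OF S s] \<sigma>(1)] groupoid_mult[OF T groupoid_inv(1)[OF T t] \<tau>(1)]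
        groupoid_inv[OF S s] groupoid_inv[OF T t] \<sigma>(2) \<tau>(2)
      unfolding wpb_rng_def wpb_dom_def by simp
    moreover have "z = wpb_mult S T (s, g, t) ?y"
      using groupoid_mult_inv_cancel[OF S s \<sigma>] groupoid_mult_inv_cancel[OF T t \<tau>]
      unfolding z wpb_mult_def by simp
    ultimately show "z \<in> ?L" using y E by blast
  qed
qed


lemma wpb_dom_middle_in_arr:
  assumes G: "groupoid G" and p: "continuous_map (gtop S) (gtop G) p"
    and q: "continuous_map (gtop T) (gtop G) q" and x: "(s, g, t) \<in> wpb_arr S G T p q"
  shows "gmult G (gmult G (ginv G (p s)) g) (q t) \<in> garr G"
proof -
  have g: "g \<in> garr G" "grng G g = grng G (p s)" "gdom G g = grng G (q t)"
    and ps: "p s \<in> garr G" and qt: "q t \<in> garr G"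
    using x continuous_map_image_subset_topspace[OF p] continuous_map_image_subset_topspace[OF q]
    unfolding wpb_arr_def by auto
  have "gmult G (ginv G (p s)) g \<in> garr G" "gdom G (gmult G (ginv G (p s)) g) = grng G (q t)"
    using groupoid_mult[OF G groupoid_inv(1)[OF G ps] g(1)] groupoid_inv(3)[OF G ps] g(2,3) by auto
  then show ?thesis using groupoid_mult(1)[OF G _ qt] by blast
qed

theorem proposition4p4:
  fixes S :: "('a, 'm) topgroupoid_scheme" and G :: "('b, 'n) topgroupoid_scheme"
    and T :: "('c, 'k) topgroupoid_scheme"
    and lamS :: "'a \<Rightarrow> 'a measure" and lamG :: "'b \<Rightarrow> 'b measure"
    and lamT :: "'c \<Rightarrow> 'c measure"
    and muS :: "'a measure" and muG :: "'b measure" and muT :: "'c measure"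
    and p :: "'a \<Rightarrow> 'b" and q :: "'c \<Rightarrow> 'b"
  assumes "haar_groupoid S lamS muS"
    and "haar_groupoid G lamG muG"
    and "haar_groupoid T lamT muT"
    and "haar_groupoid_hom S lamS muS G lamG muG p"
    and "haar_groupoid_hom T lamT muT G lamG muG q"
  shows "\<forall>x\<in>wpb_arr S G T p q. \<forall>E\<in>sets (borel_of (wpb_top S G T p q)).
           emeasure (wpb_haar G lamS lamT (wpb_dom S G T p q x)) E
         = emeasure (wpb_haar G lamS lamT (wpb_rng S T x))
             (wpb_mult S T x ` (E \<inter> {y \<in> wpb_arr S G T p q. wpb_rng S T y = wpb_dom S G T p q x}))"
proof (intro ballI)
  fix x E
  assume x: "x \<in> wpb_arr S G T p q" and E: "E \<in> sets (borel_of (wpb_top S G T p q))"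
  obtain s g t where x_eq: "x = (s, g, t)" by (cases x)
  interpret lc_haar_system_pair S lamS T lamT
    using assms(1,3) by (intro lc_haar_system_pair.intro haar_groupoid_imp_lc_haar_system)
  have G: "topological_groupoid G" "Hausdorff_space (gtop G)" "second_countable (gtop G)"
    using assms(2) unfolding haar_groupoid_def by auto
  have p: "continuous_map (gtop S) (gtop G) p" and q: "continuous_map (gtop T) (gtop G) q"
    using assms(4,5) unfolding haar_groupoid_hom_def by auto
  have E_sets: "E \<in> sets (borel_of (gtop S) \<Otimes>\<^sub>M (borel_of (gtop G) \<Otimes>\<^sub>M borel_of (gtop T)))"
    using sets_borel_of_wpb_top[OF S.second_countable G(3) T.second_countable wpb_arr_in_sets[OF G p q]] E
    by blast
  have E_arr: "E \<subseteq> wpb_arr S G T p q"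
    using sets.sets_into_space[OF E] unfolding wpb_top_def by auto
  have s: "s \<in> garr S" and g: "g \<in> garr G" and t: "t \<in> garr T"
    using x unfolding x_eq wpb_arr_def by auto
  have g': "gmult G (gmult G (ginv G (p s)) g) (q t) \<in> garr G"
    using wpb_dom_middle_in_arr[OF _ p q x[unfolded x_eq]] G(1) unfolding topological_groupoid_def by blast
  have "{g} \<in> sets (borel_of (gtop G))"
    using closedin_Hausdorff_singleton[OF G(2) g] by (rule closedin_in_borel_of)
  then show "emeasure (wpb_haar G lamS lamT (wpb_dom S G T p q x)) E
      = emeasure (wpb_haar G lamS lamT (wpb_rng S T x))
          (wpb_mult S T x ` (E \<inter> {y \<in> wpb_arr S G T p q. wpb_rng S T y = wpb_dom S G T p q x}))"
    unfolding x_eq wpb_mult_image_rfibre[OF S.groupoid T.groupoid s t E_arr]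
    using emeasure_left_translate_triple[OF s t _ _ _ E_sets] g g'
    by (simp add: wpb_haar_def wpb_dom_def wpb_rng_def)
qed

end
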